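(* Let $H$ be an undirected graph (possibly with loops), let $T$ be a tree with at least $2$ vertices and an arbitrarily chosen root $r$, and let $\alpha,\beta$ be two $H$-colorings of $T$. Then $\alpha$ can be reconfigured to $\beta$ if and only if there is a walk of even length in $H$ between $\alpha(r)$ and $\beta(r)$.
   Context: Undirected graphs are treated as digraphs with arcs in both directions for every edge. An $H$-coloring of $T$ is a map $c:V(T)\to V(H)$ such that for every edge $uv$ of $T$, $c(u)c(v)$ is an edge of $H$ (possibly a loop if $c(u)=c(v)$). $\alpha$ can be reconfigured to $\beta$ if there is a sequence of $H$-colorings of $T$ from $\alpha$ to $\beta$ in which consecutive colorings differ on exactly one vertex. A walk of length $0$ (when $\alpha(r)=\beta(r)$) counts as even. *)

theory Defs
  imports Main "HOL-Library.FuncSet"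
begin

text \<open>Undirected graphs are given by a vertex set and a symmetric edge relation
  (a set of ordered pairs containing both orientations of every edge).
  A loop at x is the pair (x,x).\<close>

definition undirected_graph :: "'a set \<Rightarrow> ('a \<times> 'a) set \<Rightarrow> bool" where
  "undirected_graph V E \<longleftrightarrow> E \<subseteq> V \<times> V \<and> sym E"

definition is_cycle :: "('a \<times> 'a) set \<Rightarrow> 'a list \<Rightarrow> bool" where
  "is_cycle E xs \<longleftrightarrow> length xs \<ge> 3 \<and> distinct xs
     \<and> (\<forall>i. Suc i < length xs \<longrightarrow> (xs ! i, xs ! Suc i) \<in> E)
     \<and> (last xs, hd xs) \<in> E"

definition is_tree :: "'a set \<Rightarrow> ('a \<times> 'a) set \<Rightarrow> bool" where
  "is_tree V E \<longleftrightarrow> finite V \<and> V \<noteq> {} \<and> undirected_graph V E \<and> irrefl E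
     \<and> (\<forall>u\<in>V. \<forall>v\<in>V. (u, v) \<in> E\<^sup>*)
     \<and> \<not> (\<exists>xs. is_cycle E xs)"

definition H_coloring ::
  "'a set \<Rightarrow> ('a \<times> 'a) set \<Rightarrow> 'b set \<Rightarrow> ('b \<times> 'b) set \<Rightarrow> ('a \<Rightarrow> 'b) \<Rightarrow> bool" where
  "H_coloring VT ET VH EH c \<longleftrightarrow> c \<in> VT \<rightarrow>\<^sub>E VH \<and> (\<forall>(u, v)\<in>ET. (c u, c v) \<in> EH)"

definition differ_on_one :: "'a set \<Rightarrow> ('a \<Rightarrow> 'b) \<Rightarrow> ('a \<Rightarrow> 'b) \<Rightarrow> bool" where
  "differ_on_one VT c d \<longleftrightarrow> (\<exists>!v. v \<in> VT \<and> c v \<noteq> d v)"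

definition reconfigurable ::
  "'a set \<Rightarrow> ('a \<times> 'a) set \<Rightarrow> 'b set \<Rightarrow> ('b \<times> 'b) set \<Rightarrow> ('a \<Rightarrow> 'b) \<Rightarrow> ('a \<Rightarrow> 'b) \<Rightarrow> bool" where
  "reconfigurable VT ET VH EH \<alpha> \<beta> \<longleftrightarrow>
     (\<exists>cs. cs \<noteq> [] \<and> hd cs = \<alpha> \<and> last cs = \<beta>
        \<and> (\<forall>c\<in>set cs. H_coloring VT ET VH EH c)
        \<and> (\<forall>i. Suc i < length cs \<longrightarrow> differ_on_one VT (cs ! i) (cs ! Suc i)))"

text \<open>A walk in H given by its list of vertices; its length is (number of vertices - 1).\<close>

definition is_walk :: "'b set \<Rightarrow> ('b \<times> 'b) set \<Rightarrow> 'b list \<Rightarrow> bool" where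
  "is_walk VH EH xs \<longleftrightarrow> xs \<noteq> [] \<and> set xs \<subseteq> VH
     \<and> (\<forall>i. Suc i < length xs \<longrightarrow> (xs ! i, xs ! Suc i) \<in> EH)"

definition even_walk :: "'b set \<Rightarrow> ('b \<times> 'b) set \<Rightarrow> 'b \<Rightarrow> 'b \<Rightarrow> bool" where
  "even_walk VH EH x y \<longleftrightarrow>
     (\<exists>xs. is_walk VH EH xs \<and> hd xs = x \<and> last xs = y \<and> even (length xs - 1))"

end

theory Submission
  imports Defs
begin

text \<open>The colour of the root can only move along even walks of H: when r is recoloured, a
  neighbour s of r keeps its colour, which is adjacent to both the old and the new colour of r.
  Conversely, induct on the number of vertices of T, deleting a leaf other than r; the base case
  is a single edge.\<close>

lemma rtrancl_iff_successively:
  "(a, b) \<in> R\<^sup>* \<longleftrightarrow>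
     (\<exists>xs. xs \<noteq> [] \<and> hd xs = a \<and> last xs = b \<and> successively (\<lambda>x y. (x, y) \<in> R) xs)"
proof
  assume "(a, b) \<in> R\<^sup>*"
  then show "\<exists>xs. xs \<noteq> [] \<and> hd xs = a \<and> last xs = b \<and> successively (\<lambda>x y. (x, y) \<in> R) xs"
  proof (induction rule: converse_rtrancl_induct)
    case base
    show ?case by (intro exI[of _ "[b]"]) simp
  next
    case (step a c)
    then obtain xs where "xs \<noteq> []" "hd xs = c" "last xs = b" "successively (\<lambda>x y. (x, y) \<in> R) xs"
      by blast
    with step.hyps(1) show ?case
      by (intro exI[of _ "a # xs"]) (auto simp: successively_Cons)
  qed
next
  assume "\<exists>xs. xs \<noteq> [] \<and> hd xs = a \<and> last xs = b \<and> successively (\<lambda>x y. (x, y) \<in> R) xs"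
  then obtain xs where "xs \<noteq> []" "hd xs = a" "last xs = b" "successively (\<lambda>x y. (x, y) \<in> R) xs"
    by blast
  then show "(a, b) \<in> R\<^sup>*"
  proof (induction xs arbitrary: a)
    case (Cons x xs)
    then show ?case
      by (cases xs) (auto simp: successively_Cons intro: converse_rtrancl_into_rtrancl)
  qed simp
qed

lemma successively_conj_iff:
  assumes "xs \<noteq> []"
  shows "P (hd xs) \<and> successively (\<lambda>x y. P x \<and> P y \<and> Q x y) xs \<longleftrightarrow>
         (\<forall>x\<in>set xs. P x) \<and> successively Q xs"
  using assms
proof (induction xs)
  case (Cons x xs)
  then show ?case by (cases xs) (auto simp: successively_Cons)
qed simp

text \<open>Unlike \<open>differ_on_one\<close>, a step may also recolour nothing; this does not change the
  reflexive transitive closure.\<close>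

definition recolor_step ::
  "'a set \<Rightarrow> ('a \<times> 'a) set \<Rightarrow> 'b set \<Rightarrow> ('b \<times> 'b) set \<Rightarrow> (('a \<Rightarrow> 'b) \<times> ('a \<Rightarrow> 'b)) set" where
  "recolor_step VT ET VH EH = {(c, d). H_coloring VT ET VH EH c \<and> H_coloring VT ET VH EH d
      \<and> (\<exists>v\<in>VT. \<forall>x\<in>VT - {v}. c x = d x)}"

lemma recolor_stepI:
  assumes "H_coloring VT ET VH EH c" "H_coloring VT ET VH EH d" "v \<in> VT"
    and "\<And>x. x \<in> VT \<Longrightarrow> x \<noteq> v \<Longrightarrow> c x = d x"
  shows "(c, d) \<in> recolor_step VT ET VH EH"
  using assms unfolding recolor_step_def by blast

lemma recolor_step_imp_H_coloring:
  "(c, d) \<in> recolor_step VT ET VH EH \<Longrightarrow> H_coloring VT ET VH EH d"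
  unfolding recolor_step_def by blast

lemma recolor_rtrancl_H_coloring:
  "(c, d) \<in> (recolor_step VT ET VH EH)\<^sup>* \<Longrightarrow> H_coloring VT ET VH EH c \<Longrightarrow> H_coloring VT ET VH EH d"
  by (induction rule: rtrancl_induct) (auto dest: recolor_step_imp_H_coloring)

lemma H_coloring_ext:
  assumes "H_coloring VT ET VH EH c" "H_coloring VT ET VH EH d" "\<And>x. x \<in> VT \<Longrightarrow> c x = d x"
  shows "c = d"
  using assms unfolding H_coloring_def by (metis PiE_ext)

lemma reconfigurable_iff_rtrancl_recolor_step:
  assumes "H_coloring VT ET VH EH \<alpha>"
  shows "reconfigurable VT ET VH EH \<alpha> \<beta> \<longleftrightarrow> (\<alpha>, \<beta>) \<in> (recolor_step VT ET VH EH)\<^sup>*"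
proof -
  let ?col = "H_coloring VT ET VH EH"
  define R where "R = {(c, d). ?col c \<and> ?col d \<and> differ_on_one VT c d}"
  have "reconfigurable VT ET VH EH \<alpha> \<beta> \<longleftrightarrow> (\<alpha>, \<beta>) \<in> R\<^sup>*"
    unfolding reconfigurable_def rtrancl_iff_successively R_def
    using successively_conj_iff[where P = ?col and Q = "differ_on_one VT"] assms
    by (auto simp: successively_conv_nth)
  also have "R\<^sup>* = (recolor_step VT ET VH EH)\<^sup>*"
  proof
    show "R\<^sup>* \<subseteq> (recolor_step VT ET VH EH)\<^sup>*"
      by (rule rtrancl_mono) (auto simp: R_def recolor_step_def differ_on_one_def)
    have "recolor_step VT ET VH EH \<subseteq> R\<^sup>="
    proof safe
      fix c d assume step: "(c, d) \<in> recolor_step VT ET VH EH" and "(c, d) \<notin> R"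
      then obtain v where v: "v \<in> VT" "\<And>x. x \<in> VT - {v} \<Longrightarrow> c x = d x" "?col c" "?col d"
        unfolding recolor_step_def by blast
      with \<open>(c, d) \<notin> R\<close> have "\<not> differ_on_one VT c d" by (auto simp: R_def)
      with v have "\<And>x. x \<in> VT \<Longrightarrow> c x = d x"
        unfolding differ_on_one_def by blast
      with v show "c = d" by (intro H_coloring_ext) auto
    qed
    then show "(recolor_step VT ET VH EH)\<^sup>* \<subseteq> R\<^sup>*"
      using rtrancl_mono rtrancl_reflcl by blast
  qed
  finally show ?thesis .
qed

lemma is_walk_iff_successively:
  "is_walk VH EH xs \<longleftrightarrow> xs \<noteq> [] \<and> set xs \<subseteq> VH \<and> successively (\<lambda>x y. (x, y) \<in> EH) xs"
  by (simp add: is_walk_def successively_conv_nth)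

lemma even_walk_iff_rtrancl_relcomp:
  assumes "EH \<subseteq> VH \<times> VH" and "y \<in> VH"
  shows "even_walk VH EH x y \<longleftrightarrow> (x, y) \<in> (EH O EH)\<^sup>*"
proof
  have "(hd xs, last xs) \<in> (EH O EH)\<^sup>*"
    if "is_walk VH EH xs" "even (length xs - 1)" for xs
    using that
  proof (induction xs rule: induct_list012)
    case (3 x y zs)
    then obtain z zs' where zs: "zs = z # zs'"
      by (cases zs) auto
    with "3.prems" have "(x, z) \<in> EH O EH" "is_walk VH EH zs" "even (length zs - 1)"
      by (auto simp: is_walk_iff_successively)
    with "3.IH"(1) zs show ?case
      by (auto intro: converse_rtrancl_into_rtrancl)
  qed (auto simp: is_walk_def)
  then show "(x, y) \<in> (EH O EH)\<^sup>*" if "even_walk VH EH x y"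
    using that unfolding even_walk_def by blast
next
  assume "(x, y) \<in> (EH O EH)\<^sup>*"
  then show "even_walk VH EH x y"
  proof (induction rule: converse_rtrancl_induct)
    case base
    show ?case
      unfolding even_walk_def is_walk_def using assms(2) by (intro exI[of _ "[y]"]) auto
  next
    case (step x z)
    then obtain m ys where m: "(x, m) \<in> EH" "(m, z) \<in> EH"
      and ys: "is_walk VH EH ys" "hd ys = z" "last ys = y" "even (length ys - 1)"
      unfolding even_walk_def by blast
    then obtain ys' where "ys = z # ys'"
      by (cases ys) (auto simp: is_walk_def)
    with m ys assms(1) show ?case
      unfolding even_walk_def
      by (intro exI[of _ "x # m # ys"]) (auto simp: is_walk_iff_successively)
  qed
qed

lemma recolor_rtrancl_imp_rtrancl_relcomp:
  assumes "(\<alpha>, \<beta>) \<in> (recolor_step VT ET VH EH)\<^sup>*"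
    and "sym EH" "(r, s) \<in> ET" "r \<noteq> s" "r \<in> VT" "s \<in> VT"
  shows "(\<alpha> r, \<beta> r) \<in> (EH O EH)\<^sup>*"
  using assms(1)
proof (induction rule: rtrancl_induct)
  case (step c d)
  from step.hyps(2) obtain v where col: "H_coloring VT ET VH EH c" "H_coloring VT ET VH EH d"
    and v: "v \<in> VT" "\<forall>x\<in>VT - {v}. c x = d x"
    unfolding recolor_step_def by blast
  show ?case
  proof (cases "c r = d r")
    case False
    with v assms(4-6) have "c s = d s" by auto
    moreover have "(c r, c s) \<in> EH" "(d r, d s) \<in> EH"
      using col assms(3) unfolding H_coloring_def by auto
    ultimately have "(c r, d r) \<in> EH O EH"
      using assms(2) by (auto dest: symD)
    with step.IH show ?thesis by simp
  qed (use step.IH in simp)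
qed simp

lemma is_cycle_iff_successively:
  "is_cycle E xs \<longleftrightarrow> 3 \<le> length xs \<and> distinct xs \<and> successively (\<lambda>x y. (x, y) \<in> E) xs
     \<and> (last xs, hd xs) \<in> E"
  by (auto simp: is_cycle_def successively_conv_nth)

lemma is_treeD:
  assumes "is_tree V E"
  shows "finite V" "E \<subseteq> V \<times> V" "sym E" "irrefl E"
    and "\<And>u v. u \<in> V \<Longrightarrow> v \<in> V \<Longrightarrow> (u, v) \<in> E\<^sup>*" "\<And>xs. \<not> is_cycle E xs"
  using assms unfolding is_tree_def undirected_graph_def by auto

lemma tree_has_neighbour:
  assumes "is_tree V E" "2 \<le> card V" "u \<in> V"
  obtains w where "(u, w) \<in> E"
proof -
  have "\<not> V \<subseteq> {u}"
    using assms(2) card_mono[of "{u}" V] by auto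
  then obtain v where "v \<in> V" "v \<noteq> u" by blast
  with is_treeD(5)[OF assms(1) assms(3)] have "(u, v) \<in> E\<^sup>*" by blast
  from this \<open>v \<noteq> u\<close> show thesis
    by (cases rule: converse_rtranclE) (auto intro: that)
qed

text \<open>The far end of a longest path starting at r is a leaf: any other neighbour would either
  extend the path or close a cycle.\<close>

lemma tree_leaf_exists:
  assumes T: "is_tree V E" and "2 \<le> card V" and "r \<in> V"
  obtains l p where "l \<in> V" "l \<noteq> r" "E `` {l} = {p}"
proof -
  note tree = is_treeD[OF T]
  define path where "path xs \<longleftrightarrow> xs \<noteq> [] \<and> hd xs = r \<and> distinct xs \<and> set xs \<subseteq> V
      \<and> successively (\<lambda>x y. (x, y) \<in> E) xs" for xs
  obtain w where w: "(r, w) \<in> E"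
    using tree_has_neighbour[OF assms] .
  with tree(2,4) have "path [r, w]"
    by (auto simp: path_def irrefl_def)
  moreover have "length xs < card V + 1" if "path xs" for xs
    using that card_mono[OF tree(1), of "set xs"] distinct_card[of xs] by (auto simp: path_def)
  ultimately obtain xs where xs: "path xs" and longest: "\<And>ys. path ys \<Longrightarrow> length ys \<le> length xs"
    using ex_has_greatest_nat[of path "[r, w]" length "card V + 1"] by blast
  from longest[OF \<open>path [r, w]\<close>] have "2 \<le> length (rev xs)" by simp
  then obtain l p zs where "rev xs = l # p # zs"
    by (metis Suc_le_length_iff numeral_2_eq_2)
  then have "xs = rev zs @ [p, l]"
    by (simp add: rev_swap)
  then obtain ys where xs_eq: "xs = ys @ [p, l]"
    by blast
  show thesis
  proof
    show "l \<in> V" "l \<noteq> r"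
      using xs by (auto simp: path_def xs_eq hd_append split: if_splits)
    have "(p, l) \<in> E"
      using xs by (simp add: path_def xs_eq successively_append_iff)
    then have "(l, p) \<in> E"
      using tree(3) by (auto dest: symD)
    moreover have "y = p" if "(l, y) \<in> E" for y
    proof (rule ccontr)
      assume "y \<noteq> p"
      have "y \<noteq> l" using that tree(4) by (auto simp: irrefl_def)
      show False
      proof (cases "y \<in> set ys")
        case True
        then obtain as bs where "ys = as @ y # bs"
          by (meson split_list)
        then have "is_cycle E (y # bs @ [p, l])"
          using xs that unfolding is_cycle_iff_successively path_def xs_eq
          by (auto simp: successively_append_iff)
        then show False using tree(6) by blast
      next
        case False
        with \<open>y \<noteq> p\<close> \<open>y \<noteq> l\<close> xs that tree(2) have "path (xs @ [y])"
          by (auto simp: path_def xs_eq successively_append_iff hd_append)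
        with longest show False by fastforce
      qed
    qed
    ultimately show "E `` {l} = {p}" by blast
  qed
qed

lemma tree_remove_leaf:
  assumes T: "is_tree V E" and "l \<in> V" "E `` {l} = {p}"
  shows "is_tree (V - {l}) (Restr E (V - {l}))"
proof -
  note tree = is_treeD[OF T]
  let ?V = "V - {l}" and ?E = "Restr E (V - {l})"
  have lp: "(l, p) \<in> E" and leaf: "\<And>y. (l, y) \<in> E \<Longrightarrow> y = p"
    using assms(3) by auto
  have p: "p \<in> ?V"
    using lp tree(2,4) by (auto simp: irrefl_def)
  have reach: "(u, if x = l then p else x) \<in> ?E\<^sup>*" if "u \<in> ?V" "(u, x) \<in> E\<^sup>*" for u x
    using that(2)
  proof (induction rule: rtrancl_induct)
    case (step x y)
    show ?case
    proof (cases "x = l \<or> y = l")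
      case True
      with step.hyps(2) leaf tree(3,4) have "x = l \<and> y = p \<or> x = p \<and> y = l"
        by (auto simp: irrefl_def dest: symD)
      with step.IH p show ?thesis by auto
    next
      case False
      with step.hyps(2) tree(2) have "(x, y) \<in> ?E" by auto
      with step.IH False show ?thesis
        using rtrancl_into_rtrancl[of u x ?E y] by simp
    qed
  qed (use that(1) in simp)
  have "(u, v) \<in> ?E\<^sup>*" if "u \<in> ?V" "v \<in> ?V" for u v
    using reach[of u v] tree(5)[of u v] that by auto
  moreover have "\<not> is_cycle ?E xs" for xs
    using tree(6)[of xs] unfolding is_cycle_def by auto
  ultimately show ?thesis
    using tree p unfolding is_tree_def undirected_graph_def by (auto simp: sym_def irrefl_def)
qed

lemma H_coloring_restrict:
  assumes "H_coloring V E VH EH c" "V' \<subseteq> V"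
  shows "H_coloring V' (Restr E V') VH EH (restrict c V')"
  using assms unfolding H_coloring_def by (auto simp: PiE_iff)

lemma recolor_step_fun_upd:
  assumes T: "is_tree V E" and H: "undirected_graph VH EH"
    and c: "H_coloring V E VH EH c" and "v \<in> V" "t \<in> VH"
    and nbrs: "\<And>w. (v, w) \<in> E \<Longrightarrow> (t, c w) \<in> EH"
  shows "(c, c(v := t)) \<in> recolor_step V E VH EH"
proof (rule recolor_stepI[OF c _ \<open>v \<in> V\<close>])
  note tree = is_treeD[OF T]
  have "c(v := t) \<in> V \<rightarrow>\<^sub>E VH"
    using c \<open>v \<in> V\<close> \<open>t \<in> VH\<close> by (auto simp: H_coloring_def PiE_iff extensional_def)
  moreover have "((c(v := t)) x, (c(v := t)) y) \<in> EH" if "(x, y) \<in> E" for x y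
  proof -
    have "x \<noteq> y" using that tree(4) by (auto simp: irrefl_def)
    moreover have "(c x, c y) \<in> EH" using that c by (auto simp: H_coloring_def)
    moreover have "(t, c x) \<in> EH" if "y = v" using nbrs \<open>(x, y) \<in> E\<close> tree(3) that by (auto dest: symD)
    ultimately show ?thesis
      using nbrs H that by (auto simp: undirected_graph_def dest: symD)
  qed
  ultimately show "H_coloring V E VH EH (c(v := t))"
    unfolding H_coloring_def by blast
qed simp

lemma H_coloring_extend_leaf:
  assumes T: "is_tree V E" and H: "undirected_graph VH EH" and "l \<in> V" "E `` {l} = {p}"
    and f: "H_coloring (V - {l}) (Restr E (V - {l})) VH EH f" and "(t, f p) \<in> EH"
  shows "H_coloring V E VH EH (f(l := t))"
proof -
  note tree = is_treeD[OF T]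
  have p: "p \<in> V" "p \<noteq> l"
    using assms(4) tree(2,4) by (auto simp: irrefl_def)
  have leaf: "x = l \<and> y = p \<or> x = p \<and> y = l" if "(x, y) \<in> E" "x = l \<or> y = l" for x y
    using that assms(4) p(2) tree(3) by (auto dest: symD)
  have "((f(l := t)) x, (f(l := t)) y) \<in> EH" if "(x, y) \<in> E" for x y
  proof (cases "x = l \<or> y = l")
    case True
    with leaf[OF that] p(2) \<open>(t, f p) \<in> EH\<close> H show ?thesis
      by (auto simp: undirected_graph_def dest: symD)
  next
    case False
    with f that tree(2) show ?thesis by (auto simp: H_coloring_def)
  qed
  moreover have "f(l := t) \<in> V \<rightarrow>\<^sub>E VH"
    using f \<open>l \<in> V\<close> \<open>(t, f p) \<in> EH\<close> H
    by (auto simp: H_coloring_def undirected_graph_def PiE_iff extensional_def)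
  ultimately show ?thesis
    unfolding H_coloring_def by blast
qed

text \<open>A step of T - l lifts to two steps of T: first give the leaf l a colour t adjacent to
  both the old and the new colour of its neighbour p. If p is the recoloured vertex, the
  colour of another neighbour q of p serves as t.\<close>

lemma recolor_step_lift_leaf:
  assumes T: "is_tree V E" and H: "undirected_graph VH EH"
    and l: "l \<in> V" "E `` {l} = {p}" and q: "(p, q) \<in> E" "q \<noteq> l"
    and step: "(restrict c (V - {l}), d') \<in> recolor_step (V - {l}) (Restr E (V - {l})) VH EH"
    and c: "H_coloring V E VH EH c"
  shows "\<exists>d. restrict d (V - {l}) = d' \<and> (c, d) \<in> (recolor_step V E VH EH)\<^sup>*"
proof -
  note tree = is_treeD[OF T]
  let ?V = "V - {l}" and ?E = "Restr E (V - {l})"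
  let ?c = "restrict c ?V"
  from step obtain v where d': "H_coloring ?V ?E VH EH d'" and v: "v \<in> ?V"
    and agree: "\<And>x. x \<in> ?V - {v} \<Longrightarrow> ?c x = d' x"
    unfolding recolor_step_def by blast
  have c': "H_coloring ?V ?E VH EH ?c"
    using H_coloring_restrict[OF c] by blast
  have lp: "(l, p) \<in> E" and pq: "p \<in> ?V" "q \<in> ?V" "q \<noteq> p"
    using l q tree(2,4) by (auto simp: irrefl_def)
  have edge: "(c x, c y) \<in> EH" if "(x, y) \<in> E" for x y
    using c that by (auto simp: H_coloring_def)
  have edge': "(d' x, d' y) \<in> EH" if "(x, y) \<in> ?E" for x y
    using d' that by (auto simp: H_coloring_def)
  define t where "t = (if v = p then c q else c l)"
  have qp: "(q, p) \<in> E"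
    using q(1) tree(3) by (auto dest: symD)
  have t_old: "(t, ?c p) \<in> EH"
    using edge[OF lp] edge[OF qp] pq(1) unfolding t_def by simp
  have t_new: "(t, d' p) \<in> EH"
  proof (cases "v = p")
    case True
    then have "t = d' q"
      using agree[of q] pq unfolding t_def by simp
    with edge'[of q p] qp pq show ?thesis by simp
  next
    case False
    then show ?thesis
      using agree[of p] pq(1) edge[OF lp] unfolding t_def by simp
  qed
  have "t \<in> VH"
    using t_old H by (auto simp: undirected_graph_def)
  have "c(l := t) = ?c(l := t)"
    using c by (auto simp: fun_eq_iff H_coloring_def PiE_iff extensional_def)
  moreover have "(c, c(l := t)) \<in> recolor_step V E VH EH"
  proof (rule recolor_step_fun_upd[OF T H c l(1) \<open>t \<in> VH\<close>])
    show "(t, c w) \<in> EH" if "(l, w) \<in> E" for w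
      using that l(2) t_old pq(1) by auto
  qed
  moreover have "(?c(l := t), d'(l := t)) \<in> recolor_step V E VH EH"
  proof (rule recolor_stepI)
    show "H_coloring V E VH EH (?c(l := t))"
      using H_coloring_extend_leaf[OF T H l c' t_old] .
    show "H_coloring V E VH EH (d'(l := t))"
      using H_coloring_extend_leaf[OF T H l d' t_new] .
    show "v \<in> V" using v by blast
    show "(?c(l := t)) x = (d'(l := t)) x" if "x \<in> V" "x \<noteq> v" for x
      using agree[of x] that by (cases "x = l") auto
  qed
  ultimately have "(c, d'(l := t)) \<in> (recolor_step V E VH EH)\<^sup>*"
    by (metis converse_rtrancl_into_rtrancl r_into_rtrancl)
  moreover have "restrict (d'(l := t)) ?V = d'"
    using d' by (auto simp: H_coloring_def PiE_iff extensional_def fun_eq_iff)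
  ultimately show ?thesis by blast
qed

lemma recolor_rtrancl_lift_leaf:
  assumes T: "is_tree V E" and H: "undirected_graph VH EH"
    and l: "l \<in> V" "E `` {l} = {p}" and q: "(p, q) \<in> E" "q \<noteq> l"
    and steps: "(restrict c (V - {l}), d') \<in> (recolor_step (V - {l}) (Restr E (V - {l})) VH EH)\<^sup>*"
    and c: "H_coloring V E VH EH c"
  shows "\<exists>d. restrict d (V - {l}) = d' \<and> (c, d) \<in> (recolor_step V E VH EH)\<^sup>*"
  using steps
proof (induction rule: rtrancl_induct)
  case (step d' e')
  then obtain d where d: "restrict d (V - {l}) = d'" "(c, d) \<in> (recolor_step V E VH EH)\<^sup>*"
    by blast
  have "H_coloring V E VH EH d"
    using recolor_rtrancl_H_coloring[OF d(2) c] .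
  with recolor_step_lift_leaf[OF T H l q] step.hyps(2) d(1)
  obtain e where "restrict e (V - {l}) = e'" "(d, e) \<in> (recolor_step V E VH EH)\<^sup>*"
    by blast
  with d(2) show ?case by (blast intro: rtrancl_trans)
qed blast

lemma recolor_rtrancl_single_edge:
  assumes T: "is_tree V E" and H: "undirected_graph VH EH" and "card V = 2" "r \<in> V"
    and \<alpha>: "H_coloring V E VH EH \<alpha>" and \<beta>: "H_coloring V E VH EH \<beta>"
    and walk: "(\<alpha> r, \<beta> r) \<in> (EH O EH)\<^sup>*"
  shows "(\<alpha>, \<beta>) \<in> (recolor_step V E VH EH)\<^sup>*"
proof -
  note tree = is_treeD[OF T]
  have EH: "sym EH" "EH \<subseteq> VH \<times> VH"
    using H by (auto simp: undirected_graph_def)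
  obtain s where rs: "(r, s) \<in> E"
    using tree_has_neighbour[OF T] assms(3,4) by auto
  then have s: "s \<in> V" "s \<noteq> r"
    using tree(2,4) by (auto simp: irrefl_def)
  then have V: "V = {r, s}"
    using \<open>r \<in> V\<close> \<open>card V = 2\<close> card_subset_eq[OF tree(1), of "{r, s}"] by auto
  then have nbr: "\<And>u w. (u, w) \<in> E \<Longrightarrow> u = r \<and> w = s \<or> u = s \<and> w = r"
    using tree(2,4) by (auto simp: irrefl_def)
  have "(f, \<beta>) \<in> (recolor_step V E VH EH)\<^sup>*"
    if "(x, \<beta> r) \<in> (EH O EH)\<^sup>*" "H_coloring V E VH EH f" "f r = x" for x f
    using that
  proof (induction arbitrary: f rule: converse_rtrancl_induct)
    case base
    show ?case
      by (rule r_into_rtrancl, rule recolor_stepI[OF base(1) \<beta> \<open>s \<in> V\<close>]) (use base(2) V in auto)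
  next
    case (step x y)
    text \<open>The walk x, m, y in H is realised by recolouring s to m and then r to y.\<close>
    then obtain m where xm: "(x, m) \<in> EH" and my: "(m, y) \<in> EH" by blast
    define f' where "f' = f(s := m)"
    have 1: "(f, f') \<in> recolor_step V E VH EH"
      unfolding f'_def using xm EH step.prems(2) nbr s
      by (intro recolor_step_fun_upd[OF T H step.prems(1) \<open>s \<in> V\<close>]) (auto dest: symD)
    have 2: "(f', f'(r := y)) \<in> recolor_step V E VH EH"
      unfolding f'_def using my EH nbr s
      by (intro recolor_step_fun_upd[OF T H recolor_step_imp_H_coloring[OF 1, unfolded f'_def] \<open>r \<in> V\<close>])
        (auto dest: symD)
    have "(f'(r := y), \<beta>) \<in> (recolor_step V E VH EH)\<^sup>*"
      using step.IH[OF recolor_step_imp_H_coloring[OF 2]] by (simp add: fun_upd_def)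
    with 1 2 show ?case
      by (meson converse_rtrancl_into_rtrancl)
  qed
  with \<alpha> walk show ?thesis by blast
qed

lemma rtrancl_relcomp_imp_recolor_rtrancl:
  assumes H: "undirected_graph VH EH"
  shows "is_tree V E \<Longrightarrow> 2 \<le> card V \<Longrightarrow> r \<in> V
    \<Longrightarrow> H_coloring V E VH EH \<alpha> \<Longrightarrow> H_coloring V E VH EH \<beta> \<Longrightarrow> (\<alpha> r, \<beta> r) \<in> (EH O EH)\<^sup>*
    \<Longrightarrow> (\<alpha>, \<beta>) \<in> (recolor_step V E VH EH)\<^sup>*"
proof (induction "card V" arbitrary: V E \<alpha> \<beta> rule: less_induct)
  case less
  note T = \<open>is_tree V E\<close> and \<alpha> = \<open>H_coloring V E VH EH \<alpha>\<close> and \<beta> = \<open>H_coloring V E VH EH \<beta>\<close>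
  note tree = is_treeD[OF T]
  show ?case
  proof (cases "card V = 2")
    case True
    with recolor_rtrancl_single_edge[OF T H] less.prems show ?thesis by blast
  next
    case False
    obtain l p where l: "l \<in> V" "l \<noteq> r" "E `` {l} = {p}"
      using tree_leaf_exists[OF T] less.prems by blast
    let ?V = "V - {l}" and ?E = "Restr E (V - {l})"
    have T': "is_tree ?V ?E"
      using tree_remove_leaf[OF T l(1,3)] .
    have card: "card ?V < card V" "2 \<le> card ?V"
      using False less.prems(2) l(1) tree(1) by (auto simp: card_Diff_singleton)
    have "p \<in> ?V"
      using l(3) tree(2,4) by (auto simp: irrefl_def)
    then obtain q where "(p, q) \<in> ?E"
      using tree_has_neighbour[OF T' card(2)] by blast
    then have q: "(p, q) \<in> E" "q \<noteq> l" by auto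
    have "(restrict \<alpha> ?V, restrict \<beta> ?V) \<in> (recolor_step ?V ?E VH EH)\<^sup>*"
      using less.hyps[OF card(1) T' card(2)] H_coloring_restrict[OF \<alpha>] H_coloring_restrict[OF \<beta>]
        less.prems(3,6) l(2) by auto
    then obtain d where d: "restrict d ?V = restrict \<beta> ?V" "(\<alpha>, d) \<in> (recolor_step V E VH EH)\<^sup>*"
      using recolor_rtrancl_lift_leaf[OF T H l(1,3) q _ \<alpha>] by blast
    have "(d, \<beta>) \<in> recolor_step V E VH EH"
    proof (rule recolor_stepI[OF recolor_rtrancl_H_coloring[OF d(2) \<alpha>] \<beta> l(1)])
      show "d x = \<beta> x" if "x \<in> V" "x \<noteq> l" for x
        using fun_cong[OF d(1), of x] that by simp
    qed
    with d(2) show ?thesis by simp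
  qed
qed

lemma tree_recolor_rtrancl_iff:
  assumes H: "undirected_graph VH EH" and T: "is_tree V E" and "2 \<le> card V" "r \<in> V"
    and \<alpha>: "H_coloring V E VH EH \<alpha>" and \<beta>: "H_coloring V E VH EH \<beta>"
  shows "(\<alpha>, \<beta>) \<in> (recolor_step V E VH EH)\<^sup>* \<longleftrightarrow> (\<alpha> r, \<beta> r) \<in> (EH O EH)\<^sup>*"
proof
  obtain s where "(r, s) \<in> E"
    using tree_has_neighbour[OF T assms(3,4)] .
  moreover from this have "s \<in> V" "r \<noteq> s"
    using is_treeD(2,4)[OF T] by (auto simp: irrefl_def)
  moreover assume "(\<alpha>, \<beta>) \<in> (recolor_step V E VH EH)\<^sup>*"
  ultimately show "(\<alpha> r, \<beta> r) \<in> (EH O EH)\<^sup>*"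
    using recolor_rtrancl_imp_rtrancl_relcomp H \<open>r \<in> V\<close> by (auto simp: undirected_graph_def)
qed (use rtrancl_relcomp_imp_recolor_rtrancl[OF H T] assms in blast)

theorem proposition5:
  fixes VH :: "'b set" and EH :: "('b \<times> 'b) set"
    and VT :: "'a set" and ET :: "('a \<times> 'a) set"
    and r :: 'a and \<alpha> \<beta> :: "'a \<Rightarrow> 'b"
  assumes "undirected_graph VH EH"
    and "is_tree VT ET" and "card VT \<ge> 2" and "r \<in> VT"
    and "H_coloring VT ET VH EH \<alpha>" and "H_coloring VT ET VH EH \<beta>"
  shows "reconfigurable VT ET VH EH \<alpha> \<beta> \<longleftrightarrow> even_walk VH EH (\<alpha> r) (\<beta> r)"
proof -
  have "reconfigurable VT ET VH EH \<alpha> \<beta> \<longleftrightarrow> (\<alpha>, \<beta>) \<in> (recolor_step VT ET VH EH)\<^sup>*"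
    using reconfigurable_iff_rtrancl_recolor_step[OF assms(5)] .
  also have "\<dots> \<longleftrightarrow> (\<alpha> r, \<beta> r) \<in> (EH O EH)\<^sup>*"
    using tree_recolor_rtrancl_iff[OF assms] .
  also have "\<dots> \<longleftrightarrow> even_walk VH EH (\<alpha> r) (\<beta> r)"
    using even_walk_iff_rtrancl_relcomp[of EH VH "\<beta> r" "\<alpha> r"] assms(1,4,6)
    by (auto simp: undirected_graph_def H_coloring_def)
  finally show ?thesis .
qed

end
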